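(* Let $\varphi,\psi\in G$ and suppose there is $C_1>0$ with $\psi(t)\le C_1\varphi(t)$ for $t\in(0,1]$. The following are equivalent: (1) $\lim_{t\to 0+}\psi(t)/\varphi(t)=0$; (2) the identity inclusion $I:\Lambda(\varphi)\to\Lambda(\psi)$ is disjointly strictly singular; (3) there do not exist a sequence of nonzero pairwise disjoint functions $x_n\in\Lambda(\varphi)$ and a constant $C_2>0$ such that $\|x_n\|_{\Lambda(\varphi)}\le C_2\|x_n\|_{\Lambda(\psi)}$ for all $n=1,2,\dots$.
   Context: All functions are Lebesgue measurable on $[0,1]$, and $x^*$ denotes the decreasing left-continuous rearrangement of $|x|$. $G$ denotes the class of all positive increasing concave functions on $(0,1]$. For $\varphi\in G$, the Lorentz space $\Lambda(\varphi)$ consists of all measurable $x$ on $[0,1]$ with $\|x\|_{\Lambda(\varphi)}=\int_0^1 x^*(s)\,d\varphi(s)<\infty$. A bounded linear operator $T$ from a Banach lattice $X$ into a Banach space $Y$ is disjointly strictly singular (DSS) if there is no sequence of nonzero pairwise disjoint elements $x_n\in X$ such that the restriction of $T$ to their closed linear span $[x_n]$ is an isomorphism (onto its image). *)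

theory Defs
  imports "HOL-Analysis.Analysis"
begin

definition classG :: "(real \<Rightarrow> real) \<Rightarrow> bool" where
  "classG \<phi> \<longleftrightarrow> (\<forall>t\<in>{0<..1}. 0 < \<phi> t) \<and> mono_on {0<..1} \<phi> \<and> concave_on {0<..1} \<phi>"

definition distf :: "(real \<Rightarrow> real) \<Rightarrow> real \<Rightarrow> real" where
  "distf x l = measure lebesgue {s\<in>{0..1}. l < \<bar>x s\<bar>}"

text \<open>Decreasing left-continuous rearrangement of |x| (values in [0,\<infinity>]):
  x*(t) = inf{\<lambda> \<ge> 0. d_x(\<lambda>) < t} for t > 0, and x*(0) = ess sup |x| = x*(0+).\<close>
definition rearr :: "(real \<Rightarrow> real) \<Rightarrow> real \<Rightarrow> ennreal" where
  "rearr x t = (if 0 < t then Inf {ennreal l | l. 0 \<le> l \<and> distf x l < t}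
                else Inf {ennreal l | l. 0 \<le> l \<and> distf x l = 0})"

text \<open>Extension of \<phi> \<in> G to a right-continuous increasing function on the real line
  with \<phi>(0) = 0 convention: the jump \<phi>(0+) sits at the point 0.\<close>
definition ext_fun :: "(real \<Rightarrow> real) \<Rightarrow> real \<Rightarrow> real" where
  "ext_fun \<phi> t = (if t < 0 then 0
                   else if t = 0 then Inf (\<phi> ` {0<..1})
                   else \<phi> (min t 1))"

definition lnorm :: "(real \<Rightarrow> real) \<Rightarrow> (real \<Rightarrow> real) \<Rightarrow> ennreal" where
  "lnorm \<phi> x = (\<integral>\<^sup>+ s. rearr x s * indicator {0..1} s \<partial>interval_measure (ext_fun \<phi>))"

definition Lorentz :: "(real \<Rightarrow> real) \<Rightarrow> (real \<Rightarrow> real) set" where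
  "Lorentz \<phi> = {x. x \<in> borel_measurable (lebesgue_on {0..1}) \<and> lnorm \<phi> x < \<infinity>}"

definition nonzero_fun :: "(real \<Rightarrow> real) \<Rightarrow> bool" where
  "nonzero_fun x \<longleftrightarrow> \<not> (AE s in lebesgue_on {0..1}. x s = 0)"

definition disjoint_seq :: "(nat \<Rightarrow> real \<Rightarrow> real) \<Rightarrow> bool" where
  "disjoint_seq x \<longleftrightarrow> (\<forall>n m. n \<noteq> m \<longrightarrow> (AE s in lebesgue_on {0..1}. x n s = 0 \<or> x m s = 0))"

definition clspan :: "(real \<Rightarrow> real) \<Rightarrow> (nat \<Rightarrow> real \<Rightarrow> real) \<Rightarrow> (real \<Rightarrow> real) set" where
  "clspan \<phi> x = {y \<in> Lorentz \<phi>. \<forall>\<epsilon>>0. \<exists>N a. lnorm \<phi> (\<lambda>s. y s - (\<Sum>i<N. a i * x i s)) < ennreal \<epsilon>}"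

text \<open>The inclusion \<Lambda>(\<phi>) \<rightarrow> \<Lambda>(\<psi>) restricted to [x_n] is an isomorphism onto its image
  (it is bounded and injective, so this means it is bounded below).\<close>
definition incl_iso_on :: "(real \<Rightarrow> real) \<Rightarrow> (real \<Rightarrow> real) \<Rightarrow> (real \<Rightarrow> real) set \<Rightarrow> bool" where
  "incl_iso_on \<phi> \<psi> Y \<longleftrightarrow> (\<exists>c>0. \<forall>y\<in>Y. lnorm \<phi> y \<le> ennreal c * lnorm \<psi> y)"

definition DSS_incl :: "(real \<Rightarrow> real) \<Rightarrow> (real \<Rightarrow> real) \<Rightarrow> bool" where
  "DSS_incl \<phi> \<psi> \<longleftrightarrow> \<not> (\<exists>x. (\<forall>n. x n \<in> Lorentz \<phi> \<and> nonzero_fun (x n)) \<and> disjoint_seq x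
                              \<and> incl_iso_on \<phi> \<psi> (clspan \<phi> x))"

end

theory Submission
  imports Defs
begin

(*
  (1) implies (3): the supports of disjoint functions eventually have small measure, and on
  sets of small measure \<psi> \<le> \<epsilon> \<phi>. By the layer cake formula
  lnorm \<phi> x = \<integral>_0^\<infinity> \<phi>(d_x(t)) dt, with d_x the distribution function of |x|,
  this gives lnorm \<psi> x \<le> \<epsilon> lnorm \<phi> x.
  (3) implies (2) because each x_n lies in [x_n].
  (2) implies (1): if \<psi>/\<phi> does not tend to 0, choose T_n decreasing to 0 with
  T_(n+1) < T_n / 2 and c \<phi>(T_n) \<le> \<psi>(T_n), and disjoint intervals of lengths T_n. For y in
  the closed span of their indicators every value d_y(t) is a limit of finite subsums S of
  the T_n. Since T_j \<le> S \<le> 2 T_j for the least index j, concavity gives c \<phi>(S) \<le> 3 \<psi>(S);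
  by continuity c \<phi>(d_y(t)) \<le> 3 \<psi>(d_y(t)), whence lnorm \<phi> y \<le> (3/c) lnorm \<psi> y on the span.
*)

section \<open>Functions of class G\<close>

lemma classG_pos: "classG \<phi> \<Longrightarrow> 0 < t \<Longrightarrow> t \<le> 1 \<Longrightarrow> 0 < \<phi> t"
  by (auto simp: classG_def)

lemma classG_mono: "classG \<phi> \<Longrightarrow> 0 < s \<Longrightarrow> s \<le> t \<Longrightarrow> t \<le> 1 \<Longrightarrow> \<phi> s \<le> \<phi> t"
  unfolding classG_def mono_on_def by auto

lemma classG_concave:
  "classG \<phi> \<Longrightarrow> x \<in> {0<..1} \<Longrightarrow> y \<in> {0<..1} \<Longrightarrow> 0 \<le> u \<Longrightarrow> 0 \<le> v \<Longrightarrow> u + v = 1 \<Longrightarrow>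
    u * \<phi> x + v * \<phi> y \<le> \<phi> (u * x + v * y)"
  unfolding classG_def concave_on_iff by auto

lemma classG_doubling:
  assumes G: "classG \<phi>" and t: "0 < t" "2 * t \<le> 1"
  shows "\<phi> (2 * t) \<le> 3 * \<phi> t"
proof -
  have "(1/3) * \<phi> (2*t) + (2/3) * \<phi> (t/2) \<le> \<phi> ((1/3) * (2*t) + (2/3) * (t/2))"
    by (rule classG_concave[OF G]) (use t in auto)
  moreover have "(1/3) * (2*t) + (2/3) * (t/2) = t" by simp
  ultimately have "(1/3) * \<phi> (2*t) + (2/3) * \<phi> (t/2) \<le> \<phi> t" by simp
  moreover have "0 < \<phi> (t/2)" by (rule classG_pos[OF G]) (use t in auto)
  ultimately show ?thesis by linarith
qed

lemma classG_continuous_on: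
  assumes G: "classG \<phi>"
  shows "continuous_on {0<..1} \<phi>"
proof -
  have "convex_on {0<..<1} (\<lambda>t. - \<phi> t)"
    using G by (auto simp: classG_def concave_on_def intro: convex_on_subset)
  then have "continuous_on {0<..<1} (\<lambda>t. - (- \<phi> t))"
    by (intro continuous_intros convex_on_continuous) auto
  then have interior: "isCont \<phi> t" if "t \<in> {0<..<1}" for t
    using that by (simp add: continuous_on_eq_continuous_at)
  have "(\<phi> \<longlongrightarrow> \<phi> 1) (at 1 within {0<..1})"
  \<comment> \<open>squeeze \<phi> between the chord through 1/2 and 1 and the constant \<phi> 1\<close>
  proof (rule tendsto_sandwich)
    have near: "\<forall>\<^sub>F t in at (1::real) within {0<..1}. 1/2 \<le> t \<and> t \<le> 1"
      unfolding eventually_at by (intro exI[of _ "1/2"]) (auto simp: dist_real_def)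
    show "\<forall>\<^sub>F t in at 1 within {0<..1}. (2*t - 1) * \<phi> 1 + (2 - 2*t) * \<phi> (1/2) \<le> \<phi> t"
      using near
    proof eventually_elim
      case (elim t)
      then have "(2*t - 1) * \<phi> 1 + (2 - 2*t) * \<phi> (1/2) \<le> \<phi> ((2*t - 1) * 1 + (2 - 2*t) * (1/2))"
        by (intro classG_concave[OF G]) auto
      then show ?case by (simp add: algebra_simps)
    qed
    show "\<forall>\<^sub>F t in at 1 within {0<..1}. \<phi> t \<le> \<phi> 1"
      using near by eventually_elim (use G in \<open>auto intro: classG_mono\<close>)
    show "((\<lambda>t. (2*t - 1) * \<phi> 1 + (2 - 2*t) * \<phi> (1/2)) \<longlongrightarrow> \<phi> 1) (at 1 within {0<..1})"
      by (auto intro!: tendsto_eq_intros)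
  qed simp
  then have at_one: "continuous (at 1 within {0<..1}) \<phi>"
    by (simp add: continuous_within)
  show ?thesis
    unfolding continuous_on_eq_continuous_within
  proof (intro ballI)
    fix t :: real assume "t \<in> {0<..1}"
    then consider "t \<in> {0<..<1}" | "t = 1" by fastforce
    then show "continuous (at t within {0<..1}) \<phi>"
      by cases (use interior at_one in \<open>auto intro: continuous_at_imp_continuous_within\<close>)
  qed
qed

section \<open>The Lebesgue--Stieltjes measure of a function in G\<close>

abbreviation stieltjes :: "(real \<Rightarrow> real) \<Rightarrow> real measure" where
  "stieltjes \<phi> \<equiv> interval_measure (ext_fun \<phi>)"

lemma classG_Inf_bounds:
  assumes G: "classG \<phi>"
  shows "0 \<le> Inf (\<phi> ` {0<..1})" and "t \<in> {0<..1} \<Longrightarrow> Inf (\<phi> ` {0<..1}) \<le> \<phi> t"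
proof -
  show "0 \<le> Inf (\<phi> ` {0<..1})"
    using classG_pos[OF G] by (intro cInf_greatest) (auto intro: less_imp_le)
  show "t \<in> {0<..1} \<Longrightarrow> Inf (\<phi> ` {0<..1}) \<le> \<phi> t"
    using classG_pos[OF G] by (intro cInf_lower bdd_belowI[of _ 0]) (auto intro: less_imp_le)
qed

lemma ext_fun_mono: "classG \<phi> \<Longrightarrow> x \<le> y \<Longrightarrow> ext_fun \<phi> x \<le> ext_fun \<phi> y"
  using classG_Inf_bounds[of \<phi>] classG_pos[of \<phi> "min y 1"] classG_mono[of \<phi> "min x 1" "min y 1"]
  by (auto simp: ext_fun_def)

lemma ext_fun_continuous_at_right:
  assumes G: "classG \<phi>"
  shows "continuous (at_right a) (ext_fun \<phi>)"
proof -
  have "\<exists>\<delta>>0. ext_fun \<phi> (a + \<delta>) - ext_fun \<phi> a < \<epsilon>" if \<epsilon>: "\<epsilon> > 0" for \<epsilon>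
  proof -
    consider "a < 0" | "a = 0" | "0 < a" "a < 1" | "1 \<le> a" by linarith
    then show ?thesis
    proof cases
      case 1
      then show ?thesis using \<epsilon> by (intro exI[of _ "- a / 2"]) (auto simp: ext_fun_def)
    next
      case 2
      have "\<exists>s\<in>\<phi> ` {0<..1}. s < Inf (\<phi> ` {0<..1}) + \<epsilon>"
        using \<epsilon> classG_pos[OF G]
        by (subst cInf_less_iff[symmetric]) (auto intro!: bdd_belowI[of _ 0] less_imp_le)
      then obtain t where "t \<in> {0<..1}" "\<phi> t < Inf (\<phi> ` {0<..1}) + \<epsilon>" by auto
      then show ?thesis using 2 by (intro exI[of _ t]) (auto simp: ext_fun_def)
    next
      case 3
      obtain \<delta> where "\<delta> > 0"
        and \<delta>: "\<And>s. s \<in> {0<..1} \<Longrightarrow> dist s a < \<delta> \<Longrightarrow> dist (\<phi> s) (\<phi> a) < \<epsilon>"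
        using classG_continuous_on[OF G] 3 \<epsilon> unfolding continuous_on_iff
        by (metis greaterThanAtMost_iff less_le)
      define s where "s = min (a + \<delta>/2) 1"
      have "s \<in> {0<..1}" "dist s a < \<delta>" "ext_fun \<phi> (a + \<delta>/2) = \<phi> s"
        using 3 \<open>\<delta> > 0\<close> by (auto simp: s_def ext_fun_def dist_real_def)
      then show ?thesis using 3 \<open>\<delta> > 0\<close> \<delta>[of s]
        by (intro exI[of _ "\<delta>/2"]) (auto simp: ext_fun_def dist_real_def)
    next
      case 4
      then show ?thesis using \<epsilon> by (intro exI[of _ 1]) (auto simp: ext_fun_def)
    qed
  qed
  then show ?thesis
    by (subst continuous_at_right_real_increasing) (auto intro: ext_fun_mono[OF G])
qed

lemma emeasure_stieltjes_Ioc: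
  "classG \<phi> \<Longrightarrow> a \<le> b \<Longrightarrow> emeasure (stieltjes \<phi>) {a<..b} = ext_fun \<phi> b - ext_fun \<phi> a"
  by (rule emeasure_interval_measure_Ioc) (auto intro: ext_fun_mono ext_fun_continuous_at_right)

lemma sigma_finite_stieltjes: "classG \<phi> \<Longrightarrow> sigma_finite_measure (stieltjes \<phi>)"
  by (rule sigma_finite_interval_measure) (auto intro: ext_fun_mono ext_fun_continuous_at_right)

lemma emeasure_stieltjes_negative:
  assumes G: "classG \<phi>"
  shows "emeasure (stieltjes \<phi>) {-1<..<0} = 0"
proof -
  have eq: "{-1<..<(0::real)} = (\<Union>n. {-1<..- inverse (real (Suc n))})"
  proof (intro equalityI subsetI)
    fix x :: real assume "x \<in> {-1<..<0}"
    moreover obtain n where "inverse (real (Suc n)) < - x"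
      using reals_Archimedean[of "-x"] calculation by auto
    ultimately have "x \<in> {-1<..- inverse (real (Suc n))}" by auto
    then show "x \<in> (\<Union>n. {-1<..- inverse (real (Suc n))})" by blast
  qed (auto simp del: of_nat_Suc intro: le_less_trans[of _ "- inverse _"])
  have "emeasure (stieltjes \<phi>) {-1<..- inverse (real (Suc n))} = 0" for n
    using emeasure_stieltjes_Ioc[OF G, of "-1" "- inverse (real (Suc n))"]
    by (cases "-1 \<le> - inverse (real (Suc n))") (auto simp: ext_fun_def)
  then show ?thesis unfolding eq by (intro emeasure_UN_eq_0) auto
qed

lemma emeasure_stieltjes_initial_segment:
  assumes G: "classG \<phi>" and a: "0 < a" "a \<le> 1"
    and L: "{0..<a} \<subseteq> L" "L \<subseteq> {0..a}" "L \<in> sets borel"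
  shows "emeasure (stieltjes \<phi>) L = \<phi> a"
proof -
  have Ioc: "emeasure (stieltjes \<phi>) {-1<..b} = \<phi> b" if "0 < b" "b \<le> 1" for b
    using emeasure_stieltjes_Ioc[OF G, of "-1" b] that by (simp add: ext_fun_def)
  have "emeasure (stieltjes \<phi>) L \<le> emeasure (stieltjes \<phi>) {-1<..a}"
    by (rule emeasure_mono) (use L in auto)
  then have upper: "emeasure (stieltjes \<phi>) L \<le> \<phi> a"
    using Ioc a by simp
  then obtain r where r: "emeasure (stieltjes \<phi>) L = ennreal r" "0 \<le> r"
    by (metis ennreal_cases ennreal_neq_top top.extremum_uniqueI)
  have "\<phi> b \<le> r" if b: "0 < b" "b < a" for b
  proof -
    have "{0..b} \<subseteq> L" using L(1) b by auto
    then have "{-1<..b} \<subseteq> {-1<..<0} \<union> L" by (force simp: subset_eq)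
    then have "emeasure (stieltjes \<phi>) {-1<..b} \<le> emeasure (stieltjes \<phi>) ({-1<..<0} \<union> L)"
      using L(3) by (intro emeasure_mono) auto
    then have "ennreal (\<phi> b) \<le> emeasure (stieltjes \<phi>) ({-1<..<0} \<union> L)"
      using Ioc[of b] b a by simp
    also have "\<dots> \<le> emeasure (stieltjes \<phi>) L"
      using emeasure_subadditive[of "{-1<..<0}" "stieltjes \<phi>" L] L
      by (simp add: emeasure_stieltjes_negative[OF G])
    finally show ?thesis using r by simp
  qed
  then have "\<forall>\<^sub>F b in at_left a. \<phi> b \<le> r"
    using eventually_at_left_real[OF a(1)] by (auto elim: eventually_mono)
  moreover have "(\<phi> \<longlongrightarrow> \<phi> a) (at_left a)"
    using a
    by (intro continuous_on_Icc_at_leftD[where a="a/2"]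
        continuous_on_subset[OF classG_continuous_on[OF G]]) auto
  ultimately have "\<phi> a \<le> r"
    by (intro tendsto_upperbound[of \<phi> "\<phi> a" "at_left a"]) auto
  with upper r show ?thesis by (simp add: order_antisym)
qed

section \<open>Distribution function and decreasing rearrangement\<close>

abbreviation level :: "(real \<Rightarrow> real) \<Rightarrow> real \<Rightarrow> real set" where
  "level x l \<equiv> {s\<in>{0..1}. l < \<bar>x s\<bar>}"

lemma level_antimono: "l \<le> l' \<Longrightarrow> level x l' \<subseteq> level x l"
  by auto

lemma sets_level:
  assumes [measurable]: "x \<in> borel_measurable (lebesgue_on {0..1})"
  shows "level x l \<in> sets lebesgue"
proof -
  have "{s \<in> space (lebesgue_on {0..1}). l < \<bar>x s\<bar>} \<in> sets (lebesgue_on {0..1})"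
    by measurable
  then show ?thesis by (subst (asm) sets_restrict_space_iff) auto
qed

lemma fmeasurable_level:
  assumes "x \<in> borel_measurable (lebesgue_on {0..1})"
  shows "level x l \<in> fmeasurable lebesgue"
  by (rule fmeasurableI2[OF lmeasurable_cbox[of 0 1] _ sets_level[OF assms]]) auto

lemma emeasure_level:
  assumes "x \<in> borel_measurable (lebesgue_on {0..1})"
  shows "emeasure lebesgue (level x l) = distf x l"
  unfolding distf_def by (rule emeasure_eq_measure2[OF fmeasurable_level[OF assms]])

lemma distf_nonneg: "0 \<le> distf x l"
  by (simp add: distf_def)

lemma distf_le_1:
  assumes "x \<in> borel_measurable (lebesgue_on {0..1})"
  shows "distf x l \<le> 1"
proof -
  have "distf x l \<le> measure lebesgue (cbox 0 (1::real))"
    unfolding distf_def by (rule measure_mono_fmeasurable[OF _ sets_level[OF assms]]) auto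
  then show ?thesis by simp
qed

lemma distf_antimono:
  assumes "x \<in> borel_measurable (lebesgue_on {0..1})" "l \<le> l'"
  shows "distf x l' \<le> distf x l"
  unfolding distf_def
  using level_antimono[OF assms(2)] sets_level[OF assms(1)] fmeasurable_level[OF assms(1)]
  by (rule measure_mono_fmeasurable)

lemma distf_eq_0_iff_AE:
  assumes "x \<in> borel_measurable (lebesgue_on {0..1})"
  shows "distf x 0 = 0 \<longleftrightarrow> (AE s in lebesgue_on {0..1}. x s = 0)"
proof -
  have "level x 0 = {s \<in> space (lebesgue_on {0..1}). \<not> x s = 0}" by auto
  then have "(AE s in lebesgue_on {0..1}. x s = 0)
      \<longleftrightarrow> emeasure (lebesgue_on {0..1}) (level x 0) = 0"
    using sets_level[OF assms, of 0]
    by (intro AE_iff_measurable) (auto intro: sets_restrict_space_iff[THEN iffD2])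
  also have "emeasure (lebesgue_on {0..1}) (level x 0) = emeasure lebesgue (level x 0)"
    by (rule emeasure_restrict_space) auto
  finally show ?thesis
    using emeasure_level[OF assms, of 0] distf_nonneg[of x 0] by simp
qed
lemma distf_right_continuous:
  assumes meas: "x \<in> borel_measurable (lebesgue_on {0..1})" and s: "s < distf x l"
  shows "\<exists>d>0. s < distf x (l + d)"
proof -
  define A where "A n = level x (l + inverse (real (Suc n)))" for n
  have U: "(\<Union>n. A n) = level x l"
  proof (intro equalityI subsetI)
    fix s assume "s \<in> level x l"
    then obtain n where "inverse (real (Suc n)) < \<bar>x s\<bar> - l" "s \<in> {0..1}"
      using reals_Archimedean[of "\<bar>x s\<bar> - l"] by auto
    then have "s \<in> A n" by (auto simp: A_def)
    then show "s \<in> (\<Union>n. A n)" by blast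
  next
    fix s assume "s \<in> (\<Union>n. A n)"
    then obtain n where "s \<in> {0..1}" "l + inverse (real (Suc n)) < \<bar>x s\<bar>"
      by (auto simp: A_def)
    moreover have "0 < inverse (real (Suc n))" by simp
    ultimately have "l < \<bar>x s\<bar>" by linarith
    with \<open>s \<in> {0..1}\<close> show "s \<in> level x l" by simp
  qed
  moreover have "incseq A"
  proof (rule incseq_SucI)
    fix n
    have "inverse (real (Suc (Suc n))) \<le> inverse (real (Suc n))"
      by (rule le_imp_inverse_le) auto
    then show "A n \<subseteq> A (Suc n)" unfolding A_def by (intro level_antimono) simp
  qed
  moreover have "range A \<subseteq> sets lebesgue"
    using sets_level[OF meas] by (auto simp: A_def)
  moreover have "emeasure lebesgue (\<Union>n. A n) \<noteq> \<infinity>"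
    unfolding U emeasure_level[OF meas] by simp
  ultimately have "(\<lambda>n. measure lebesgue (A n)) \<longlonglongrightarrow> measure lebesgue (\<Union>n. A n)"
    by (intro Lim_measure_incseq)
  then have "(\<lambda>n. distf x (l + inverse (real (Suc n)))) \<longlonglongrightarrow> distf x l"
    unfolding U unfolding A_def distf_def .
  from order_tendstoD(1)[OF this s] obtain n where "s < distf x (l + inverse (real (Suc n)))"
    by (auto simp: eventually_sequentially)
  then show ?thesis by (intro exI[of _ "inverse (real (Suc n))"]) auto
qed

lemma rearr_antimono: "s \<le> s' \<Longrightarrow> rearr x s' \<le> rearr x s"
  unfolding rearr_def by (auto intro!: Inf_superset_mono)

lemma rearr_le:
  assumes "0 \<le> t" "0 \<le> s" "distf x t < s \<or> distf x t = 0"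
  shows "rearr x s \<le> ennreal t"
  using assms distf_nonneg[of x t] unfolding rearr_def by (auto intro!: Inf_lower)

lemma less_rearr:
  assumes meas: "x \<in> borel_measurable (lebesgue_on {0..1})"
    and "0 \<le> t" "0 \<le> s" "s < distf x t"
  shows "ennreal t < rearr x s"
proof -
  obtain d where d: "d > 0" "s < distf x (t + d)"
    using distf_right_continuous[OF meas assms(4)] by auto
  have "t + d \<le> l" if "distf x l \<le> s" for l
    using distf_antimono[OF meas, of l "t + d"] that d by force
  then have "ennreal (t + d) \<le> rearr x s"
    unfolding rearr_def using assms(3) by (auto intro!: Inf_greatest ennreal_leI)
  moreover have "ennreal t < ennreal (t + d)"
    using d assms by (simp add: ennreal_lessI)
  ultimately show ?thesis by simp
qed

abbreviation rearr01 :: "(real \<Rightarrow> real) \<Rightarrow> real \<Rightarrow> ennreal" where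
  "rearr01 x s \<equiv> rearr x s * indicator {0..1} s"

lemma borel_measurable_if_superlevels_interval:
  fixes h :: "real \<Rightarrow> ennreal"
  assumes "\<And>y. is_interval {s. y < h s}"
  shows "h \<in> borel_measurable borel"
  by (rule borel_measurableI_greater) (use assms real_interval_borel_measurable in simp)

lemma borel_measurable_rearr01: "rearr01 x \<in> borel_measurable borel"
proof (rule borel_measurable_if_superlevels_interval)
  fix y
  show "is_interval {s. y < rearr01 x s}"
    unfolding is_interval_1
  proof (intro ballI allI impI, elim conjE)
    fix a b z assume ab: "a \<in> {s. y < rearr01 x s}" "b \<in> {s. y < rearr01 x s}" "a \<le> z" "z \<le> b"
    then have "a \<in> {0..1}" "b \<in> {0..1}" "y < rearr x b"
      by (auto simp: indicator_def of_bool_def split: if_splits)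
    then show "z \<in> {s. y < rearr01 x s}"
      using rearr_antimono[of z b x] ab by auto
  qed
qed

lemma distf_add_le:
  assumes "f \<in> borel_measurable (lebesgue_on {0..1})" "g \<in> borel_measurable (lebesgue_on {0..1})"
  shows "distf (\<lambda>s. f s + g s) (l1 + l2) \<le> distf f l1 + distf g l2"
proof -
  have "level (\<lambda>s. f s + g s) (l1 + l2) \<subseteq> level f l1 \<union> level g l2"
    by auto
  then have "distf (\<lambda>s. f s + g s) (l1 + l2) \<le> measure lebesgue (level f l1 \<union> level g l2)"
    unfolding distf_def using assms
    by (intro measure_mono_fmeasurable sets_level fmeasurable.Un fmeasurable_level borel_measurable_add)
  also have "\<dots> \<le> distf f l1 + distf g l2"
    unfolding distf_def using sets_level[OF assms(1)] sets_level[OF assms(2)] by (rule measure_Un_le)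
  finally show ?thesis .
qed

section \<open>The layer cake formula for the Lorentz norm\<close>

lemma nn_integral_lborel_below:
  fixes g :: ennreal
  shows "(\<integral>\<^sup>+t. (if 0 \<le> t \<and> ennreal t < g then 1 else 0) \<partial>lborel) = g"
proof (cases g)
  case (real r)
  then have "(\<lambda>t. if 0 \<le> t \<and> ennreal t < g then 1 else 0 :: ennreal) = indicator {0..<r}"
    by (auto simp: indicator_def fun_eq_iff ennreal_less_iff)
  then show ?thesis using real by simp
next
  case top
  then have "(\<lambda>t. if 0 \<le> t \<and> ennreal t < g then 1 else 0 :: ennreal) = indicator {0..}"
    by (auto simp: indicator_def fun_eq_iff)
  moreover have "emeasure lborel {0::real..} = \<infinity>"
  proof -
    have "of_nat n \<le> emeasure lborel {0::real..}" for n
      using emeasure_mono[of "{0..real n}" "{0::real..}" lborel]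
      by (simp add: ennreal_of_nat_eq_real_of_nat)
    then have "(SUP n. of_nat n) \<le> emeasure lborel {0::real..}"
      by (intro SUP_least)
    then show ?thesis
      by (simp add: ennreal_SUP_of_nat_eq_top top_unique)
  qed
  ultimately show ?thesis using top by simp
qed

lemma nn_integral_layer_cake:
  assumes "sigma_finite_measure M" and [measurable]: "g \<in> borel_measurable M"
  shows "(\<integral>\<^sup>+x. g x \<partial>M) = (\<integral>\<^sup>+t. emeasure M {x\<in>space M. ennreal t < g x} * indicator {0..} t \<partial>lborel)"
proof -
  interpret pair_sigma_finite M lborel
    unfolding pair_sigma_finite_def using assms(1) lborel.sigma_finite_measure_axioms by simp
  define f where "f x t = (if 0 \<le> t \<and> ennreal t < g x then 1 else 0 :: ennreal)" for x t
  have [measurable]: "case_prod f \<in> borel_measurable (M \<Otimes>\<^sub>M lborel)"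
    unfolding f_def by measurable
  have "(\<integral>\<^sup>+x. g x \<partial>M) = (\<integral>\<^sup>+x. (\<integral>\<^sup>+t. f x t \<partial>lborel) \<partial>M)"
    unfolding f_def nn_integral_lborel_below ..
  also have "\<dots> = (\<integral>\<^sup>+t. (\<integral>\<^sup>+x. f x t \<partial>M) \<partial>lborel)"
    by (rule Fubini'[symmetric]) measurable
  also have "\<dots> = (\<integral>\<^sup>+t. emeasure M {x\<in>space M. ennreal t < g x} * indicator {0..} t \<partial>lborel)"
  proof (rule nn_integral_cong)
    fix t :: real
    have "(\<integral>\<^sup>+x. f x t \<partial>M) = (\<integral>\<^sup>+x. indicator {x\<in>space M. ennreal t < g x} x * indicator {0..} t \<partial>M)"
      by (rule nn_integral_cong) (auto simp: f_def indicator_def)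
    also have "\<dots> = emeasure M {x\<in>space M. ennreal t < g x} * indicator {0..} t"
      by (subst nn_integral_multc) simp_all
    finally show "(\<integral>\<^sup>+x. f x t \<partial>M) = emeasure M {x\<in>space M. ennreal t < g x} * indicator {0..} t" .
  qed
  finally show ?thesis .
qed

text \<open>The fundamental function of \<Lambda>(\<phi>): the norm of the indicator of a set of measure a.\<close>
definition fundamental :: "(real \<Rightarrow> real) \<Rightarrow> real \<Rightarrow> real" where
  "fundamental \<phi> a = (if a = 0 then 0 else \<phi> a)"

lemma emeasure_stieltjes_superlevel_rearr01:
  assumes G: "classG \<phi>" and meas: "x \<in> borel_measurable (lebesgue_on {0..1})" and t: "0 \<le> t"
  shows "emeasure (stieltjes \<phi>) {s. ennreal t < rearr01 x s} = fundamental \<phi> (distf x t)"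
proof (cases "distf x t = 0")
  case True
  have "rearr01 x s \<le> ennreal t" for s
    using rearr_le[of t s x] True t by (cases "s \<in> {0..1}") auto
  then have "{s. ennreal t < rearr01 x s} = {}"
    by (auto simp: not_less[symmetric])
  then show ?thesis using True by (simp add: fundamental_def)
next
  case False
  have d: "0 < distf x t" "distf x t \<le> 1"
    using False distf_nonneg[of x t] distf_le_1[OF meas] by auto
  have "{0..<distf x t} \<subseteq> {s. ennreal t < rearr01 x s}"
    using less_rearr[OF meas t] d by auto
  moreover have "{s. ennreal t < rearr01 x s} \<subseteq> {0..distf x t}"
  proof
    fix s assume s: "s \<in> {s. ennreal t < rearr01 x s}"
    then have "s \<in> {0..1}" by (auto simp: indicator_def of_bool_def split: if_splits)
    moreover have "\<not> distf x t < s"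
      using rearr_le[of t s x] t s calculation by (auto simp: not_le[symmetric])
    ultimately show "s \<in> {0..distf x t}" by auto
  qed
  moreover have "{s \<in> space borel. ennreal t < rearr01 x s} \<in> sets borel"
    using borel_measurable_rearr01[of x] by measurable
  ultimately show ?thesis
    using emeasure_stieltjes_initial_segment[OF G d, of "{s. ennreal t < rearr01 x s}"] False
    by (simp add: fundamental_def)
qed

lemma lnorm_layer_cake:
  assumes G: "classG \<phi>" and meas: "x \<in> borel_measurable (lebesgue_on {0..1})"
  shows "lnorm \<phi> x = (\<integral>\<^sup>+t. ennreal (fundamental \<phi> (distf x t)) * indicator {0..} t \<partial>lborel)"
proof -
  have "lnorm \<phi> x
      = (\<integral>\<^sup>+t. emeasure (stieltjes \<phi>) {s. ennreal t < rearr01 x s} * indicator {0..} t \<partial>lborel)"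
    unfolding lnorm_def
    by (subst nn_integral_layer_cake[OF sigma_finite_stieltjes[OF G]])
       (use borel_measurable_rearr01[of x] in \<open>simp_all cong: measurable_cong_sets\<close>)
  also have "\<dots> = (\<integral>\<^sup>+t. ennreal (fundamental \<phi> (distf x t)) * indicator {0..} t \<partial>lborel)"
  proof (rule nn_integral_cong)
    fix t :: real
    show "emeasure (stieltjes \<phi>) {s. ennreal t < rearr01 x s} * indicator {0..} t
        = ennreal (fundamental \<phi> (distf x t)) * indicator {0..} t"
      by (cases "0 \<le> t") (simp_all add: emeasure_stieltjes_superlevel_rearr01[OF G meas])
  qed
  finally show ?thesis .
qed

lemma fundamental_nonneg: "classG \<phi> \<Longrightarrow> 0 \<le> a \<Longrightarrow> a \<le> 1 \<Longrightarrow> 0 \<le> fundamental \<phi> a"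
  using classG_pos[of \<phi> a] by (auto simp: fundamental_def)

lemma fundamental_distf_antimono:
  assumes G: "classG \<phi>" and meas: "x \<in> borel_measurable (lebesgue_on {0..1})" and "s \<le> t"
  shows "fundamental \<phi> (distf x t) \<le> fundamental \<phi> (distf x s)"
  using classG_pos[OF G, of "distf x s"] classG_mono[OF G, of "distf x t" "distf x s"]
    distf_antimono[OF meas assms(3)] distf_nonneg[of x t] distf_le_1[OF meas, of s]
  by (auto simp: fundamental_def)

lemma borel_measurable_fundamental_distf:
  assumes G: "classG \<phi>" and meas: "x \<in> borel_measurable (lebesgue_on {0..1})"
  shows "(\<lambda>t. ennreal (fundamental \<phi> (distf x t)) * indicator {0..} t) \<in> borel_measurable borel"
proof (rule borel_measurable_if_superlevels_interval)
  fix y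
  show "is_interval {t. y < ennreal (fundamental \<phi> (distf x t)) * indicator {0..} t}"
    unfolding is_interval_1
  proof (intro ballI allI impI, elim conjE)
    fix a b z
    assume "a \<in> {t. y < ennreal (fundamental \<phi> (distf x t)) * indicator {0..} t}"
      and b: "b \<in> {t. y < ennreal (fundamental \<phi> (distf x t)) * indicator {0..} t}"
      and "a \<le> z" "z \<le> b"
    then have "0 \<le> z" "y < ennreal (fundamental \<phi> (distf x b))"
      by (auto simp: indicator_def of_bool_def split: if_splits)
    moreover have "ennreal (fundamental \<phi> (distf x b)) \<le> ennreal (fundamental \<phi> (distf x z))"
      using fundamental_distf_antimono[OF G meas \<open>z \<le> b\<close>] by (rule ennreal_leI)
    ultimately show "z \<in> {t. y < ennreal (fundamental \<phi> (distf x t)) * indicator {0..} t}"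
      by simp
  qed
qed

lemma lnorm_le_cmult_lnorm:
  assumes G: "classG \<phi>" "classG \<psi>" and meas: "x \<in> borel_measurable (lebesgue_on {0..1})"
    and C: "0 \<le> C"
    and le: "\<And>t. 0 \<le> t \<Longrightarrow> 0 < distf x t \<Longrightarrow> \<phi> (distf x t) \<le> C * \<psi> (distf x t)"
  shows "lnorm \<phi> x \<le> ennreal C * lnorm \<psi> x"
proof -
  have "fundamental \<phi> (distf x t) \<le> C * fundamental \<psi> (distf x t)" if "0 \<le> t" for t
    using le[OF that] distf_nonneg[of x t] by (auto simp: fundamental_def less_le)
  then have "ennreal (fundamental \<phi> (distf x t)) * indicator {0..} t
      \<le> ennreal C * (ennreal (fundamental \<psi> (distf x t)) * indicator {0..} t)" for t
    using C fundamental_nonneg[OF G(2) distf_nonneg distf_le_1[OF meas], of t]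
    by (cases "0 \<le> t") (auto simp: ennreal_mult[symmetric] intro: ennreal_leI)
  then have "lnorm \<phi> x \<le> (\<integral>\<^sup>+t. ennreal C * (ennreal (fundamental \<psi> (distf x t)) * indicator {0..} t) \<partial>lborel)"
    unfolding lnorm_layer_cake[OF G(1) meas] by (intro nn_integral_mono)
  also have "\<dots> = ennreal C * lnorm \<psi> x"
    using borel_measurable_fundamental_distf[OF G(2) meas]
    by (simp add: nn_integral_cmult lnorm_layer_cake[OF G(2) meas])
  finally show ?thesis .
qed

lemma lnorm_ge_distf:
  assumes G: "classG \<phi>" and meas: "x \<in> borel_measurable (lebesgue_on {0..1})"
    and \<eta>: "0 < \<eta>" "0 < distf x \<eta>"
  shows "ennreal (\<eta> * \<phi> (distf x \<eta>)) \<le> lnorm \<phi> x"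
proof -
  have "ennreal (\<eta> * \<phi> (distf x \<eta>)) = (\<integral>\<^sup>+t. ennreal (fundamental \<phi> (distf x \<eta>)) * indicator {0..\<eta>} t \<partial>lborel)"
    using \<eta> classG_pos[OF G \<eta>(2) distf_le_1[OF meas]]
    by (simp add: nn_integral_cmult_indicator ennreal_mult' fundamental_def mult.commute)
  also have "\<dots> \<le> (\<integral>\<^sup>+t. ennreal (fundamental \<phi> (distf x t)) * indicator {0..} t \<partial>lborel)"
    using fundamental_distf_antimono[OF G meas]
    by (intro nn_integral_mono) (auto simp: indicator_def intro: ennreal_leI)
  finally show ?thesis unfolding lnorm_layer_cake[OF G meas] .
qed

lemma lnorm_zero:
  assumes G: "classG \<phi>"
  shows "lnorm \<phi> (\<lambda>s. 0) = 0"
proof -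
  have "(\<lambda>t. ennreal (fundamental \<phi> (distf (\<lambda>s. 0) t)) * indicator {0..} t) = (\<lambda>t. 0)"
    by (auto simp: fun_eq_iff distf_def fundamental_def indicator_def)
  then show ?thesis unfolding lnorm_layer_cake[OF G borel_measurable_const] by simp
qed

lemma lnorm_bounded:
  assumes G: "classG \<phi>" and meas: "x \<in> borel_measurable (lebesgue_on {0..1})"
    and bound: "\<And>s. s \<in> {0..1} \<Longrightarrow> \<bar>x s\<bar> \<le> c"
  shows "lnorm \<phi> x \<le> ennreal (c * \<phi> 1)"
proof -
  have c: "0 \<le> c" using bound[of 0] by simp
  have "level x c = {}" using bound by (auto simp: not_less[symmetric])
  then have "distf x c = 0" unfolding distf_def by (simp only: measure_empty)
  then have "rearr01 x s \<le> ennreal c * indicator {0..1} s" for s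
    using rearr_le[of c s x] c by (auto simp: indicator_def)
  then have "lnorm \<phi> x \<le> (\<integral>\<^sup>+s. ennreal c * indicator {0..1} s \<partial>stieltjes \<phi>)"
    unfolding lnorm_def by (intro nn_integral_mono)
  also have "\<dots> = ennreal c * emeasure (stieltjes \<phi>) {0..1}"
    by (simp add: nn_integral_cmult_indicator)
  also have "emeasure (stieltjes \<phi>) {0..1} = \<phi> 1"
    by (rule emeasure_stieltjes_initial_segment[OF G]) auto
  finally show ?thesis using c by (simp add: ennreal_mult')
qed

lemma lnorm_pos:
  assumes G: "classG \<phi>" and meas: "x \<in> borel_measurable (lebesgue_on {0..1})"
    and nz: "nonzero_fun x"
  shows "0 < lnorm \<phi> x"
proof -
  have "0 < distf x 0"
    using nz distf_eq_0_iff_AE[OF meas] distf_nonneg[of x 0] by (auto simp: nonzero_fun_def less_le)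
  then obtain \<eta> where \<eta>: "0 < \<eta>" "0 < distf x \<eta>"
    using distf_right_continuous[OF meas] by fastforce
  then have "0 < ennreal (\<eta> * \<phi> (distf x \<eta>))"
    using classG_pos[OF G \<eta>(2) distf_le_1[OF meas]] by simp
  also have "\<dots> \<le> lnorm \<phi> x" by (rule lnorm_ge_distf[OF G meas \<eta>])
  finally show ?thesis .
qed

section \<open>Disjoint sequences\<close>

lemma sum_distf_le_1_if_disjoint:
  assumes meas: "\<And>n. x n \<in> borel_measurable (lebesgue_on {0..1})"
    and dis: "disjoint_seq x" and I: "finite I"
  shows "(\<Sum>i\<in>I. distf (x i) 0) \<le> 1"
proof -
  have "pairwise (\<lambda>i j. AE s in lebesgue. s \<notin> level (x i) 0 \<or> s \<notin> level (x j) 0) I"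
  proof (rule pairwiseI)
    fix i j :: nat assume "i \<noteq> j"
    then have "AE s in lebesgue. s \<in> {0..1} \<longrightarrow> x i s = 0 \<or> x j s = 0"
      using dis by (simp add: disjoint_seq_def AE_restrict_space_iff)
    then show "AE s in lebesgue. s \<notin> level (x i) 0 \<or> s \<notin> level (x j) 0"
      by eventually_elim auto
  qed
  then have "(\<Sum>i\<in>I. distf (x i) 0) = measure lebesgue (\<Union>i\<in>I. level (x i) 0)"
    unfolding distf_def using fmeasurable_level[OF meas] I by (intro measure_UNION_AE[symmetric])
  also have "\<dots> \<le> measure lebesgue (cbox 0 (1::real))"
    using sets_level[OF meas, where l=0] I by (intro measure_mono_fmeasurable sets.finite_UN) auto
  finally show ?thesis by simp
qed

lemma disjoint_seq_small_support:
  assumes meas: "\<And>n. x n \<in> borel_measurable (lebesgue_on {0..1})"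
    and dis: "disjoint_seq x" and \<delta>: "0 < \<delta>"
  obtains n where "distf (x n) 0 < \<delta>"
proof -
  obtain N where N: "1 < real N * \<delta>"
    using ex_less_of_nat_mult[OF \<delta>] by auto
  have "\<exists>n<N. distf (x n) 0 < \<delta>"
  proof (rule ccontr)
    assume "\<not> ?thesis"
    then have "\<forall>n<N. \<delta> \<le> distf (x n) 0" by (meson not_less)
    then have "real N * \<delta> \<le> (\<Sum>n<N. distf (x n) 0)"
      using sum_mono[of "{..<N}" "\<lambda>_. \<delta>" "\<lambda>n. distf (x n) 0"] by simp
    with N sum_distf_le_1_if_disjoint[OF meas dis, of "{..<N}"] show False by simp
  qed
  then show thesis using that by blast
qed

lemma lnorm_le_cmult_lnorm_small_support:
  assumes G: "classG \<phi>" "classG \<psi>" and meas: "x \<in> borel_measurable (lebesgue_on {0..1})"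
    and \<epsilon>: "0 \<le> \<epsilon>" and support: "distf x 0 < b"
    and ratio: "\<And>t. 0 < t \<Longrightarrow> t < b \<Longrightarrow> t \<le> 1 \<Longrightarrow> \<psi> t \<le> \<epsilon> * \<phi> t"
  shows "lnorm \<psi> x \<le> ennreal \<epsilon> * lnorm \<phi> x"
proof (rule lnorm_le_cmult_lnorm[OF G(2,1) meas \<epsilon>])
  fix t :: real assume "0 \<le> t" "0 < distf x t"
  moreover have "distf x t < b"
    using distf_antimono[OF meas \<open>0 \<le> t\<close>] support by simp
  ultimately show "\<psi> (distf x t) \<le> \<epsilon> * \<phi> (distf x t)"
    using ratio distf_le_1[OF meas] by blast
qed

lemma no_lower_estimate_if_ratio_tendsto_0:
  assumes G: "classG \<phi>" "classG \<psi>"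
    and lim: "((\<lambda>t. \<psi> t / \<phi> t) \<longlongrightarrow> 0) (at_right 0)"
    and C2: "0 < C2" and x: "\<And>n. x n \<in> Lorentz \<phi>" "\<And>n. nonzero_fun (x n)" "disjoint_seq x"
    and le: "\<And>n. lnorm \<phi> (x n) \<le> ennreal C2 * lnorm \<psi> (x n)"
  shows False
proof -
  define \<epsilon> where "\<epsilon> = 1 / (2 * C2)"
  have \<epsilon>: "0 < \<epsilon>" using C2 by (simp add: \<epsilon>_def)
  obtain b where b: "0 < b" "\<And>t. 0 < t \<Longrightarrow> t < b \<Longrightarrow> \<psi> t / \<phi> t < \<epsilon>"
    using order_tendstoD(2)[OF lim \<epsilon>] unfolding eventually_at_right_field by auto
  have ratio: "\<psi> t \<le> \<epsilon> * \<phi> t" if "0 < t" "t < b" "t \<le> 1" for t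
    using b(2)[OF that(1,2)] classG_pos[OF G(1) that(1,3)] by (simp add: divide_less_eq)
  have meas: "x n \<in> borel_measurable (lebesgue_on {0..1})" for n
    using x(1) by (simp add: Lorentz_def)
  obtain n where "distf (x n) 0 < b"
    using disjoint_seq_small_support[OF meas x(3) b(1)] .
  then have "lnorm \<psi> (x n) \<le> ennreal \<epsilon> * lnorm \<phi> (x n)"
    using lnorm_le_cmult_lnorm_small_support[OF G meas _ _ ratio] \<epsilon> by simp
  with le[of n] have "lnorm \<phi> (x n) \<le> ennreal C2 * (ennreal \<epsilon> * lnorm \<phi> (x n))"
    by (meson mult_left_mono order_trans zero_le)
  also have "\<dots> = ennreal (C2 * \<epsilon>) * lnorm \<phi> (x n)"
    using C2 \<epsilon> by (simp add: ennreal_mult mult.assoc)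
  also have "C2 * \<epsilon> = 1/2"
    using C2 by (simp add: \<epsilon>_def)
  finally have "lnorm \<phi> (x n) \<le> ennreal (1/2) * lnorm \<phi> (x n)" .
  moreover have "0 < lnorm \<phi> (x n)" "lnorm \<phi> (x n) < \<infinity>"
    using lnorm_pos[OF G(1) meas x(2)] x(1) by (auto simp: Lorentz_def)
  then obtain r where r: "lnorm \<phi> (x n) = ennreal r" "0 < r"
    by (cases "lnorm \<phi> (x n)") auto
  ultimately have "ennreal r \<le> ennreal (1/2 * r)"
    by (subst ennreal_mult') auto
  with r(2) show False by simp
qed

lemma self_mem_clspan:
  assumes G: "classG \<phi>" and x: "x n \<in> Lorentz \<phi>"
  shows "x n \<in> clspan \<phi> x"
proof -
  have eq: "(\<lambda>s. x n s - (\<Sum>i<Suc n. (if i = n then 1 else 0) * x i s)) = (\<lambda>s. 0)"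
    by (simp add: if_distrib)
  show ?thesis
    unfolding clspan_def
  proof (intro CollectI conjI allI impI)
    fix \<epsilon> :: real assume "0 < \<epsilon>"
    then show "\<exists>N a. lnorm \<phi> (\<lambda>s. x n s - (\<Sum>i<N. a i * x i s)) < ennreal \<epsilon>"
      using eq lnorm_zero[OF G]
      by (intro exI[of _ "Suc n"] exI[of _ "\<lambda>i. if i = n then 1 else 0"]) simp
  qed (rule x)
qed

lemma lower_estimate_if_not_DSS_incl:
  assumes G: "classG \<phi>" and "\<not> DSS_incl \<phi> \<psi>"
  obtains x C2 where "C2 > 0" "\<forall>n. x n \<in> Lorentz \<phi> \<and> nonzero_fun (x n)" "disjoint_seq x"
    "\<forall>n. lnorm \<phi> (x n) \<le> ennreal C2 * lnorm \<psi> (x n)"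
proof -
  obtain x C2 where x: "\<forall>n. x n \<in> Lorentz \<phi> \<and> nonzero_fun (x n)" "disjoint_seq x"
    and C2: "C2 > 0" "\<forall>y\<in>clspan \<phi> x. lnorm \<phi> y \<le> ennreal C2 * lnorm \<psi> y"
    using assms(2) unfolding DSS_incl_def incl_iso_on_def by auto
  then show thesis
    using self_mem_clspan[OF G] by (intro that[OF C2(1) x]) auto
qed

section \<open>Lacunary blocks\<close>

lemma frequently_ratio_ge_if_not_tendsto_0:
  assumes G: "classG \<phi>" "classG \<psi>"
    and nlim: "\<not> ((\<lambda>t. \<psi> t / \<phi> t) \<longlongrightarrow> 0) (at_right 0)"
  obtains c where "0 < c" "\<exists>\<^sub>F t in at_right 0. c * \<phi> t \<le> \<psi> t"
proof -
  have near: "\<forall>\<^sub>F t in at_right 0. 0 < t \<and> t \<le> (1::real)"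
    using eventually_at_right_real[of 0 "1::real"] by (auto elim: eventually_mono)
  then have "\<forall>\<^sub>F t in at_right 0. a < \<psi> t / \<phi> t" if "a < 0" for a :: real
    by eventually_elim
       (use classG_pos[OF G(1)] classG_pos[OF G(2)] in \<open>auto intro: less_trans[OF that divide_pos_pos]\<close>)
  then obtain c where c: "0 < c" "\<not> (\<forall>\<^sub>F t in at_right 0. \<psi> t / \<phi> t < c)"
    using nlim unfolding order_tendsto_iff by auto
  then have "\<exists>\<^sub>F t in at_right 0. c \<le> \<psi> t / \<phi> t"
    by (simp add: frequently_def not_le)
  then have "\<exists>\<^sub>F t in at_right 0. c \<le> \<psi> t / \<phi> t \<and> 0 < t \<and> t \<le> 1"
    using near by (rule frequently_eventually_frequently)
  then have "\<exists>\<^sub>F t in at_right 0. c * \<phi> t \<le> \<psi> t"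
    by (rule frequently_elim1)
       (use classG_pos[OF G(1)] in \<open>auto simp: pos_le_divide_eq mult.commute\<close>)
  with c(1) show thesis by (rule that)
qed

locale lacunary =
  fixes T :: "nat \<Rightarrow> real"
  assumes T_pos: "0 < T n" and T_less: "T n < 1/4" and T_Suc_less: "T (Suc n) < T n / 2"

lemma obtain_lacunary:
  assumes "\<exists>\<^sub>F t in at_right 0. P t"
  obtains T where "lacunary T" "\<And>n. P (T n)"
proof -
  have small: "\<exists>t. P t \<and> 0 < t \<and> t < \<delta>" if "0 < \<delta>" for \<delta> :: real
  proof -
    have "\<not> (\<forall>t>0. t < \<delta> \<longrightarrow> \<not> P t)"
      using assms that unfolding frequently_def eventually_at_right_field by blast
    then show ?thesis by blast
  qed
  have "\<exists>T. \<forall>n. (P (T n) \<and> 0 < T n \<and> T n < 1/4) \<and> T (Suc n) < T n / 2"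
  proof (rule dependent_nat_choice)
    show "\<exists>t. P t \<and> 0 < t \<and> t < 1/4" using small[of "1/4"] by simp
    fix t n assume "P t \<and> 0 < t \<and> t < 1/4"
    then show "\<exists>t'. (P t' \<and> 0 < t' \<and> t' < 1/4) \<and> t' < t / 2"
      using small[of "t/2"] by auto
  qed
  then obtain T where "\<forall>n. (P (T n) \<and> 0 < T n \<and> T n < 1/4) \<and> T (Suc n) < T n / 2" ..
  then show thesis by (intro that[of T]) (auto simp: lacunary_def)
qed

context lacunary
begin

lemma sum_T_interval: "(\<Sum>i\<in>{n..<n+k}. T i) \<le> 2 * T n - 2 * T (n+k)"
proof (induction k)
  case (Suc k)
  then show ?case using T_Suc_less[of "n+k"] by simp
qed simp

lemma sum_T_bounds:
  assumes "finite F" "F \<noteq> {}"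
  shows "T (Min F) \<le> (\<Sum>i\<in>F. T i)" and "(\<Sum>i\<in>F. T i) \<le> 2 * T (Min F)"
proof -
  show "T (Min F) \<le> (\<Sum>i\<in>F. T i)"
    using assms T_pos by (intro member_le_sum) (auto intro: less_imp_le)
  let ?k = "Max F + 1 - Min F"
  have "Min F \<le> Max F"
    using assms by (simp add: Min_le_iff)
  then have "Min F + ?k = Suc (Max F)" by simp
  then have "F \<subseteq> {Min F..<Min F + ?k}"
    using assms by (auto simp: less_Suc_eq_le)
  then have "(\<Sum>i\<in>F. T i) \<le> (\<Sum>i\<in>{Min F..<Min F + ?k}. T i)"
    using T_pos by (intro sum_mono2) (auto intro: less_imp_le)
  also have "\<dots> \<le> 2 * T (Min F)"
    using sum_T_interval[of "Min F" ?k] T_pos[of "Min F + ?k"] by simp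
  finally show "(\<Sum>i\<in>F. T i) \<le> 2 * T (Min F)" .
qed

definition edge :: "nat \<Rightarrow> real" where
  "edge n = 1 - (\<Sum>i<n. T i)"

definition block :: "nat \<Rightarrow> real set" where
  "block n = {edge (Suc n)<..edge n}"

lemma edge_Suc: "edge (Suc n) = edge n - T n"
  by (simp add: edge_def)

lemma edge_bounds: "1/2 \<le> edge n" "edge n \<le> 1"
proof -
  have "(\<Sum>i<n. T i) \<le> 2 * T 0"
    using sum_T_interval[of 0 n] T_pos[of n] by (simp add: atLeast0LessThan)
  then show "1/2 \<le> edge n" using T_less[of 0] by (simp add: edge_def)
  show "edge n \<le> 1" using T_pos by (simp add: edge_def sum_nonneg less_imp_le)
qed

lemma edge_antimono: "n \<le> m \<Longrightarrow> edge m \<le> edge n"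
proof (induction m rule: dec_induct)
  case (step m)
  then show ?case using edge_Suc[of m] T_pos[of m] by simp
qed simp

lemma block_subset: "block n \<subseteq> {0..1}"
  using edge_bounds[of "Suc n"] edge_bounds[of n] by (auto simp: block_def)

lemma disjoint_blocks: "n \<noteq> m \<Longrightarrow> block n \<inter> block m = {}"
proof -
  have "block n \<inter> block m = {}" if "n < m" for n m
    using edge_antimono[of "Suc n" m] that by (auto simp: block_def)
  then show "n \<noteq> m \<Longrightarrow> block n \<inter> block m = {}"
    by (metis inf_commute linorder_neqE_nat)
qed

lemma measure_block: "measure lebesgue (block n) = T n"
  using edge_Suc[of n] T_pos[of n] by (simp add: block_def)

lemma lmeasurable_block: "block n \<in> lmeasurable"
  by (rule fmeasurableI) (use edge_Suc[of n] T_pos[of n] in \<open>simp_all add: block_def\<close>)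

lemma sum_blocks_on_block:
  fixes b :: "nat \<Rightarrow> real"
  assumes "s \<in> block j"
  shows "(\<Sum>i<N. b i * indicator (block i) s) = (if j < N then b j else 0)"
proof -
  have "(\<Sum>i<N. b i * indicator (block i) s) = (\<Sum>i<N. if i = j then b i else 0)"
    using assms disjoint_blocks by (intro sum.cong) (auto simp: indicator_def)
  then show ?thesis by simp
qed

lemma distf_sum_blocks:
  fixes b :: "nat \<Rightarrow> real"
  assumes "0 \<le> l"
  shows "distf (\<lambda>s. \<Sum>i<N. b i * indicator (block i) s) l = (\<Sum>i | i < N \<and> l < \<bar>b i\<bar>. T i)"
proof -
  let ?F = "{i. i < N \<and> l < \<bar>b i\<bar>}"
  have "level (\<lambda>s. \<Sum>i<N. b i * indicator (block i) s) l = (\<Union>i\<in>?F. block i)"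
  proof (intro equalityI subsetI)
    fix s assume s: "s \<in> level (\<lambda>s. \<Sum>i<N. b i * indicator (block i) s) l"
    then obtain j where j: "s \<in> block j"
      using assms by (fastforce simp: indicator_def intro: ccontr)
    then show "s \<in> (\<Union>i\<in>?F. block i)"
      using s sum_blocks_on_block[OF j, where N=N and b=b] assms by (auto split: if_splits)
  next
    fix s assume "s \<in> (\<Union>i\<in>?F. block i)"
    then obtain j where j: "j \<in> ?F" "s \<in> block j" by auto
    then show "s \<in> level (\<lambda>s. \<Sum>i<N. b i * indicator (block i) s) l"
      using sum_blocks_on_block[OF j(2), where N=N and b=b] block_subset[of j] by auto
  qed
  moreover have "measure lebesgue (\<Union>i\<in>?F. block i) = (\<Sum>i\<in>?F. measure lebesgue (block i))"
    using disjoint_blocks lmeasurable_block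
    by (intro measure_UNION') (auto simp: pairwise_def disjnt_def)
  ultimately show ?thesis by (simp add: distf_def measure_block)
qed

lemma block_indicator_measurable: "indicator (block n) \<in> borel_measurable (lebesgue_on {0..1})"
  by (intro measurable_restrict_space1 borel_measurable_indicator) (simp add: block_def)

lemma block_indicator_Lorentz:
  assumes G: "classG \<phi>"
  shows "indicator (block n) \<in> Lorentz \<phi>"
proof -
  have "lnorm \<phi> (indicator (block n)) \<le> ennreal (1 * \<phi> 1)"
    by (rule lnorm_bounded[OF G block_indicator_measurable]) (simp add: indicator_def)
  then have "lnorm \<phi> (indicator (block n)) < top"
    using ennreal_less_top by (rule le_less_trans)
  then show ?thesis
    by (simp add: Lorentz_def block_indicator_measurable)
qed

lemma block_indicator_nonzero: "nonzero_fun (indicator (block n))"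
proof -
  have "level (indicator (block n)) 0 = block n"
    using block_subset[of n] by (auto simp: indicator_def)
  then have "distf (indicator (block n)) 0 = T n"
    by (simp add: distf_def measure_block)
  then show ?thesis
    using distf_eq_0_iff_AE[OF block_indicator_measurable, of n] T_pos[of n]
    by (simp add: nonzero_fun_def)
qed

lemma disjoint_seq_block_indicators: "disjoint_seq (\<lambda>n. indicator (block n))"
  unfolding disjoint_seq_def
  by (auto intro!: AE_I2 dest: disjoint_blocks simp: indicator_def)

lemma subsum_ratio_bound:
  assumes G: "classG \<phi>" "classG \<psi>" and c: "0 < c" and ratio: "\<And>n. c * \<phi> (T n) \<le> \<psi> (T n)"
    and F: "finite F" "F \<noteq> {}"
  shows "0 < (\<Sum>i\<in>F. T i)" "(\<Sum>i\<in>F. T i) \<le> 1/2" "c * \<phi> (\<Sum>i\<in>F. T i) \<le> 3 * \<psi> (\<Sum>i\<in>F. T i)"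
proof -
  let ?S = "\<Sum>i\<in>F. T i" and ?j = "Min F"
  have S: "T ?j \<le> ?S" "?S \<le> 2 * T ?j" using sum_T_bounds[OF F] by auto
  have j: "0 < T ?j" "T ?j < 1/4" using T_pos T_less by auto
  then show "0 < ?S" "?S \<le> 1/2" using S by auto
  have "c * \<phi> ?S \<le> c * \<phi> (2 * T ?j)"
    using S j c by (intro mult_left_mono classG_mono[OF G(1)]) auto
  also have "\<dots> \<le> 3 * (c * \<phi> (T ?j))"
    using classG_doubling[OF G(1), of "T ?j"] j c by simp
  also have "\<dots> \<le> 3 * \<psi> ?S"
    using ratio[of ?j] classG_mono[OF G(2), of "T ?j" ?S] S j by simp
  finally show "c * \<phi> ?S \<le> 3 * \<psi> ?S" .
qed

text \<open>Chebyshev's inequality for the error w = y - z of a finite combination z of the block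
  indicators makes w small in distribution, while the distribution values of z are subsums
  of the T n.\<close>
lemma distf_clspan_approx:
  assumes G: "classG \<phi>" and y: "y \<in> clspan \<phi> (\<lambda>n. indicator (block n))"
    and t: "0 \<le> t" and \<rho>: "0 < \<rho>" "\<rho> \<le> 1"
  obtains F where "finite F" "\<bar>(\<Sum>i\<in>F. T i) - distf y t\<bar> < 2 * \<rho>"
proof -
  have ym: "y \<in> borel_measurable (lebesgue_on {0..1})"
    using y by (simp add: clspan_def Lorentz_def)
  obtain d where d: "0 < d" "distf y t - \<rho> < distf y (t + d)"
    using distf_right_continuous[OF ym, of "distf y t - \<rho>" t] \<rho> by auto
  define \<eta> where "\<eta> = d / 2"
  have \<eta>: "0 < \<eta>" "0 < \<eta> * \<phi> \<rho>"
    using d classG_pos[OF G \<rho>] by (auto simp: \<eta>_def)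
  then obtain N b where
    close: "lnorm \<phi> (\<lambda>s. y s - (\<Sum>i<N. b i * indicator (block i) s)) < ennreal (\<eta> * \<phi> \<rho>)"
    using y unfolding clspan_def by blast
  define z where "z = (\<lambda>s. \<Sum>i<N. b i * indicator (block i) s)"
  define w where "w = (\<lambda>s. y s - z s)"
  have zm: "z \<in> borel_measurable (lebesgue_on {0..1})"
    unfolding z_def
    by (intro borel_measurable_sum borel_measurable_times borel_measurable_const block_indicator_measurable)
  have wm: "w \<in> borel_measurable (lebesgue_on {0..1})"
    unfolding w_def using ym zm by (rule borel_measurable_diff)
  have w_small: "distf w \<eta> < \<rho>"
  proof (rule ccontr)
    assume "\<not> distf w \<eta> < \<rho>"
    then have "\<rho> \<le> distf w \<eta>" "0 < distf w \<eta>" using \<rho> by auto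
    then have "ennreal (\<eta> * \<phi> \<rho>) \<le> ennreal (\<eta> * \<phi> (distf w \<eta>))"
      using \<eta> \<rho> distf_le_1[OF wm] by (intro ennreal_leI mult_left_mono classG_mono[OF G]) auto
    also have "\<dots> \<le> lnorm \<phi> w"
      by (rule lnorm_ge_distf[OF G wm \<eta>(1) \<open>0 < distf w \<eta>\<close>])
    finally show False using close by (simp add: w_def z_def)
  qed
  define F where "F = {i. i < N \<and> t + \<eta> < \<bar>b i\<bar>}"
  have S: "distf z (t + \<eta>) = (\<Sum>i\<in>F. T i)"
    unfolding z_def F_def by (rule distf_sum_blocks) (use t \<eta> in auto)
  have "distf z (t + \<eta>) \<le> distf y t + distf (\<lambda>s. - w s) \<eta>"
    using distf_add_le[OF ym borel_measurable_uminus[OF wm], of t \<eta>] by (simp add: w_def)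
  also have "distf (\<lambda>s. - w s) \<eta> = distf w \<eta>"
    by (simp add: distf_def)
  finally have upper: "distf z (t + \<eta>) \<le> distf y t + distf w \<eta>" .
  have lower: "distf y (t + d) \<le> distf z (t + \<eta>) + distf w \<eta>"
    using distf_add_le[OF zm wm, of "t + \<eta>" \<eta>] by (simp add: w_def \<eta>_def add.commute)
  show thesis
  proof
    show "finite F" by (simp add: F_def)
    show "\<bar>(\<Sum>i\<in>F. T i) - distf y t\<bar> < 2 * \<rho>"
      using S upper lower w_small d(2) by linarith
  qed
qed

text \<open>The bound of subsum_ratio_bound passes to the limit d_y(t) by continuity of \<phi> and \<psi>.\<close>
lemma ratio_bound_clspan:
  assumes G: "classG \<phi>" "classG \<psi>" and c: "0 < c" and ratio: "\<And>n. c * \<phi> (T n) \<le> \<psi> (T n)"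
    and y: "y \<in> clspan \<phi> (\<lambda>n. indicator (block n))" and t: "0 \<le> t" and pos: "0 < distf y t"
  shows "c * \<phi> (distf y t) \<le> 3 * \<psi> (distf y t)"
proof (rule ccontr)
  define a where "a = distf y t"
  define h where "h s = c * \<phi> s - 3 * \<psi> s" for s
  assume "\<not> c * \<phi> (distf y t) \<le> 3 * \<psi> (distf y t)"
  then have "0 < h a" by (simp add: h_def a_def)
  have a: "0 < a" "a \<le> 1"
    using pos distf_le_1 y by (auto simp: a_def clspan_def Lorentz_def)
  have "continuous_on {0<..1} h"
    unfolding h_def using G by (intro continuous_intros classG_continuous_on)
  then obtain r where r: "0 < r" "\<And>s. s \<in> {0<..1} \<Longrightarrow> dist s a < r \<Longrightarrow> dist (h s) (h a) < h a"
    using a \<open>0 < h a\<close> unfolding continuous_on_iff by (metis greaterThanAtMost_iff)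
  define \<rho> where "\<rho> = min 1 (min r a / 2)"
  have \<rho>: "0 < \<rho>" "\<rho> \<le> 1" "2 * \<rho> \<le> r" "2 * \<rho> \<le> a"
    using r a by (auto simp: \<rho>_def)
  obtain F where F: "finite F" "\<bar>(\<Sum>i\<in>F. T i) - a\<bar> < 2 * \<rho>"
    using distf_clspan_approx[OF G(1) y t \<rho>(1,2)] by (auto simp: a_def)
  then have "F \<noteq> {}" using \<rho> by auto
  note S = subsum_ratio_bound[OF G c ratio F(1) this]
  have "dist (h (\<Sum>i\<in>F. T i)) (h a) < h a"
    using S(1,2) F(2) \<rho> by (intro r(2)) (auto simp: dist_real_def)
  then show False
    using S(3) by (auto simp: h_def dist_real_def)
qed

end

lemma not_DSS_incl_if_ratio_not_tendsto_0:
  assumes G: "classG \<phi>" "classG \<psi>"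
    and nlim: "\<not> ((\<lambda>t. \<psi> t / \<phi> t) \<longlongrightarrow> 0) (at_right 0)"
  shows "\<not> DSS_incl \<phi> \<psi>"
proof -
  obtain c where c: "0 < c" and "\<exists>\<^sub>F t in at_right 0. c * \<phi> t \<le> \<psi> t"
    using frequently_ratio_ge_if_not_tendsto_0[OF G nlim] by blast
  then obtain T where "lacunary T" and ratio: "\<And>n. c * \<phi> (T n) \<le> \<psi> (T n)"
    using obtain_lacunary by blast
  interpret lacunary T by fact
  have "incl_iso_on \<phi> \<psi> (clspan \<phi> (\<lambda>n. indicator (block n)))"
    unfolding incl_iso_on_def
  proof (intro exI[of _ "3 / c"] conjI ballI)
    fix y assume y: "y \<in> clspan \<phi> (\<lambda>n. indicator (block n))"
    have "y \<in> borel_measurable (lebesgue_on {0..1})"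
      using y by (simp add: clspan_def Lorentz_def)
    then show "lnorm \<phi> y \<le> ennreal (3 / c) * lnorm \<psi> y"
      using ratio_bound_clspan[OF G c ratio y] c
      by (intro lnorm_le_cmult_lnorm[OF G]) (auto simp: field_simps)
  qed (use c in simp)
  then show ?thesis
    unfolding DSS_incl_def not_not
    using block_indicator_Lorentz[OF G(1)] block_indicator_nonzero disjoint_seq_block_indicators
    by (intro exI[of _ "\<lambda>n. indicator (block n)"]) simp
qed

theorem corollary1:
  fixes \<phi> \<psi> :: "real \<Rightarrow> real" and C1 :: real
  assumes "classG \<phi>" and "classG \<psi>" and "C1 > 0"
    and "\<forall>t\<in>{0<..1}. \<psi> t \<le> C1 * \<phi> t"
  shows "(((\<lambda>t. \<psi> t / \<phi> t) \<longlongrightarrow> 0) (at_right 0) \<longleftrightarrow> DSS_incl \<phi> \<psi>)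
       \<and> (DSS_incl \<phi> \<psi> \<longleftrightarrow>
          \<not> (\<exists>x C2. C2 > 0 \<and> (\<forall>n. x n \<in> Lorentz \<phi> \<and> nonzero_fun (x n)) \<and> disjoint_seq x
                  \<and> (\<forall>n. lnorm \<phi> (x n) \<le> ennreal C2 * lnorm \<psi> (x n))))"
proof -
  \<comment> \<open>The domination \<psi> \<le> C1 \<phi> only makes the inclusion bounded; the equivalences do not need it.\<close>
  let ?lim = "((\<lambda>t. \<psi> t / \<phi> t) \<longlongrightarrow> 0) (at_right 0)"
  let ?lower = "\<exists>x C2. C2 > 0 \<and> (\<forall>n. x n \<in> Lorentz \<phi> \<and> nonzero_fun (x n)) \<and> disjoint_seq x
                  \<and> (\<forall>n. lnorm \<phi> (x n) \<le> ennreal C2 * lnorm \<psi> (x n))"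
  have "?lim \<Longrightarrow> \<not> ?lower"
    using no_lower_estimate_if_ratio_tendsto_0[OF assms(1,2)] by blast
  moreover have "\<not> DSS_incl \<phi> \<psi> \<Longrightarrow> ?lower"
    using lower_estimate_if_not_DSS_incl[OF assms(1)] by blast
  moreover have "DSS_incl \<phi> \<psi> \<Longrightarrow> ?lim"
    using not_DSS_incl_if_ratio_not_tendsto_0[OF assms(1,2)] by blast
  ultimately show ?thesis by blast
qed

end
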